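(* For every integer $t\ge 0$, the two-dimensional continued fractions associated to the operators $$A_t=\begin{pmatrix}0&1&0\\0&0&1\\1&1+t&-t-2\end{pmatrix}\quad\text{and}\quad M_t=\begin{pmatrix}0&0&1\\1&0&-t-5\\0&1&t+6\end{pmatrix}$$ are equivalent.
   Context: Let $n\ge1$. Given $n+1$ hyperplanes through the origin of $\mathbb R^{n+1}$ in general position, their complement consists of $2^{n+1}$ open orthants. For each orthant, the sail is the boundary of the convex hull of all integer points, other than the origin, lying in the closure of that orthant; the union of all $2^{n+1}$ sails is the $n$-dimensional continued fraction associated to these hyperplanes. If $A\in GL(n+1,\mathbb Z)$ has characteristic polynomial irreducible over $\mathbb Q$ with all roots real and distinct, the $n+1$ hyperplanes spanned by the subsets of $n$ of its $n+1$ linearly independent eigenvectors are in general position, and the continued fraction they define is called the continued fraction associated to $A$. Two continued fractions are equivalent if there is a linear transformation of $\mathbb R^{n+1}$ preserving the integer lattice $\mathbb Z^{n+1}$ that maps one onto the other. (Here $n=2$; for every $t\ge0$ both matrices have characteristic polynomial irreducible over $\mathbb Q$ with three distinct real roots, so the associated continued fractions are defined.) *)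

theory Defs
  imports "HOL-Analysis.Analysis"
begin

definition int_point :: "real^'n \<Rightarrow> bool" where
  "int_point x \<longleftrightarrow> (\<forall>i. x $ i \<in> \<int>)"

definition eigvecs :: "real^'n^'n \<Rightarrow> (real^'n) set" where
  "eigvecs A = {v. v \<noteq> 0 \<and> (\<exists>l::real. A *v v = l *\<^sub>R v)}"

text \<open>The hyperplanes spanned by n of the n+1 linearly independent eigenvectors
  (here the ambient dimension is CARD('n) = n+1).\<close>
definition eig_hyperplanes :: "real^'n^'n \<Rightarrow> (real^'n) set set" where
  "eig_hyperplanes A =
     {span S | S. S \<subseteq> eigvecs A \<and> independent S \<and> card S = CARD('n) - 1}"

definition orthants :: "(real^'n) set set \<Rightarrow> (real^'n) set set" where
  "orthants Hs = components (UNIV - \<Union>Hs)"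

definition sail :: "(real^'n) set \<Rightarrow> (real^'n) set" where
  "sail C = frontier (convex hull {x. x \<in> closure C \<and> int_point x \<and> x \<noteq> 0})"

definition cont_frac :: "(real^'n) set set \<Rightarrow> (real^'n) set" where
  "cont_frac Hs = (\<Union>C \<in> orthants Hs. sail C)"

definition cont_frac_of_matrix :: "real^'n^'n \<Rightarrow> (real^'n) set" where
  "cont_frac_of_matrix A = cont_frac (eig_hyperplanes A)"

definition lattice_preserving :: "real^'n^'n \<Rightarrow> bool" where
  "lattice_preserving P \<longleftrightarrow> invertible P \<and> (\<forall>i j. P $ i $ j \<in> \<int>)
      \<and> (\<forall>i j. matrix_inv P $ i $ j \<in> \<int>)"

definition cf_equivalent :: "(real^'n) set \<Rightarrow> (real^'n) set \<Rightarrow> bool" where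
  "cf_equivalent X Y \<longleftrightarrow> (\<exists>P. lattice_preserving P \<and> (\<lambda>x. P *v x) ` X = Y)"

definition A_mat :: "nat \<Rightarrow> real^3^3" where
  "A_mat t = vector [vector [0, 1, 0], vector [0, 0, 1],
                     vector [1, 1 + real t, - real t - 2]]"

definition M_mat :: "nat \<Rightarrow> real^3^3" where
  "M_mat t = vector [vector [0, 0, 1], vector [1, 0, - real t - 5],
                     vector [0, 1, real t + 6]]"

end

theory Submission
  imports Defs
begin

text \<open>
  The matrix \<open>B\<^sub>t = A\<^sub>t\<^sup>2 + (t + 3) A\<^sub>t + 2\<close> is a polynomial in \<open>A\<^sub>t\<close>, and conversely
  \<open>A\<^sub>t = - B\<^sub>t\<^sup>2 + (t + 6) B\<^sub>t - (t + 4)\<close>; hence \<open>A\<^sub>t\<close> and \<open>B\<^sub>t\<close> have the same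
  eigenvectors. On the other hand \<open>M\<^sub>t Q\<^sub>t = Q\<^sub>t B\<^sub>t\<close> for an integer matrix \<open>Q\<^sub>t\<close> with
  integer inverse, so \<open>Q\<^sub>t\<close> maps the eigenvectors of \<open>A\<^sub>t\<close> onto those of \<open>M\<^sub>t\<close>. A linear
  automorphism of the lattice carries hyperplanes, orthants, integer points, convex hulls
  and frontiers to the corresponding objects, so \<open>Q\<^sub>t\<close> maps the continued fraction of
  \<open>A\<^sub>t\<close> onto that of \<open>M\<^sub>t\<close>.
\<close>

lemma components_homeomorphism:
  assumes "homeomorphism S T f g"
  shows "components T = image f ` components S"
proof -
  have "T = f ` S"
    using assms by (simp add: homeomorphism_def)
  then have "components T = (\<lambda>x. connected_component_set T (f x)) ` S"
    by (simp add: components_def image_image)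
  also have "\<dots> = (\<lambda>x. f ` connected_component_set S x) ` S"
    using connected_component_set_homeomorphism[OF assms] by simp
  also have "\<dots> = image f ` components S"
    by (simp add: components_def image_image)
  finally show ?thesis .
qed

lemma components_injective_linear_image:
  fixes f :: "'a::euclidean_space \<Rightarrow> 'b::euclidean_space"
  assumes "linear f" "inj f"
  shows "components (f ` S) = image f ` components S"
proof -
  obtain g where "homeomorphism (f ` S) S g f"
    using linear_homeomorphism_image[OF assms] .
  then show ?thesis
    by (rule components_homeomorphism[OF homeomorphism_symD])
qed

lemma frontier_injective_linear_image:
  fixes f :: "'a::euclidean_space \<Rightarrow> 'a"
  assumes "linear f" "inj f"
  shows "frontier (f ` S) = f ` frontier S"
  using assms by (simp add: frontier_def closure_injective_linear_image[symmetric]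
      interior_injective_linear_image image_set_diff)

lemma sail_linear_image:
  fixes f :: "real^'n \<Rightarrow> real^'n"
  assumes f: "linear f" "inj f" and int: "\<And>x. int_point (f x) \<longleftrightarrow> int_point x"
  shows "sail (f ` C) = f ` sail C"
proof -
  have "f x = 0 \<longleftrightarrow> x = 0" for x
    using f by (metis injD linear_0)
  then have "{x. x \<in> closure (f ` C) \<and> int_point x \<and> x \<noteq> 0}
      = f ` {x. x \<in> closure C \<and> int_point x \<and> x \<noteq> 0}"
    using int by (auto simp flip: closure_injective_linear_image[OF f])
  then show ?thesis
    unfolding sail_def
    by (simp add: convex_hull_linear_image[OF f(1), symmetric] frontier_injective_linear_image[OF f])
qed

lemma cont_frac_linear_image:
  fixes f :: "real^'n \<Rightarrow> real^'n"
  assumes f: "linear f" "inj f" and int: "\<And>x. int_point (f x) \<longleftrightarrow> int_point x"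
  shows "cont_frac (image f ` Hs) = f ` cont_frac Hs"
proof -
  have "surj f"
    using f by (simp add: linear_injective_imp_surjective)
  then have "UNIV - \<Union>(image f ` Hs) = f ` (UNIV - \<Union>Hs)"
    using f(2) by (simp add: image_set_diff image_Union)
  then have "orthants (image f ` Hs) = image f ` orthants Hs"
    unfolding orthants_def by (simp only: components_injective_linear_image[OF f])
  then show ?thesis
    unfolding cont_frac_def by (simp only: image_image sail_linear_image[OF assms] image_UN)
qed

lemma independent_injective_linear_image_iff:
  fixes f :: "'a::euclidean_space \<Rightarrow> 'a"
  assumes f: "linear f" "inj f"
  shows "independent (f ` S) \<longleftrightarrow> independent S"
proof
  obtain g where g: "linear g" "g \<circ> f = id"
    using linear_injective_left_inverse[OF f] by blast
  have "surj f"
    using f by (simp add: linear_injective_imp_surjective)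
  with g(2) have "inj g"
    by (metis comp_apply id_apply injI surjD)
  moreover assume "independent (f ` S)"
  ultimately have "independent (g ` f ` S)"
    using linear_independent_injective_image[OF g(1)] inj_on_subset by blast
  then show "independent S"
    by (simp add: image_comp g(2))
next
  assume "independent S"
  then show "independent (f ` S)"
    using linear_independent_injective_image[OF f(1)] inj_on_subset[OF f(2)] by blast
qed

lemma eig_hyperplanes_linear_image:
  fixes f :: "real^'n \<Rightarrow> real^'n"
  assumes f: "linear f" "inj f" and eig: "eigvecs M = f ` eigvecs B"
  shows "eig_hyperplanes M = image f ` eig_hyperplanes B"
proof -
  have card: "card (f ` S) = card S" for S
    using f(2) by (simp add: card_image inj_on_subset)
  have "eig_hyperplanes M =
      {span (f ` S) | S. S \<subseteq> eigvecs B \<and> independent (f ` S) \<and> card (f ` S) = CARD('n) - 1}"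
    unfolding eig_hyperplanes_def eig subset_image_iff by blast
  also have "\<dots> = {f ` span S | S. S \<subseteq> eigvecs B \<and> independent S \<and> card S = CARD('n) - 1}"
    by (simp add: independent_injective_linear_image_iff[OF f] card linear_span_image[OF f(1)])
  also have "\<dots> = image f ` eig_hyperplanes B"
    unfolding eig_hyperplanes_def by blast
  finally show ?thesis .
qed

lemma eigvecs_intertwining_subset:
  fixes M Q B :: "real^'n^'n"
  assumes MQ: "M ** Q = Q ** B" and Q: "inj ((*v) Q)"
  shows "(*v) Q ` eigvecs B \<subseteq> eigvecs M"
proof
  fix y assume "y \<in> (*v) Q ` eigvecs B"
  then obtain v l where v: "v \<noteq> 0" "B *v v = l *\<^sub>R v" and y: "y = Q *v v"
    unfolding eigvecs_def by blast
  have "y \<noteq> 0"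
    using Q v(1) y by (metis injD matrix_vector_mult_0_right)
  have "M *v y = Q *v (B *v v)"
    by (simp add: y MQ matrix_vector_mul_assoc)
  also have "\<dots> = l *\<^sub>R y"
    by (simp add: y v(2) matrix_vector_mult_scaleR)
  finally show "y \<in> eigvecs M"
    using \<open>y \<noteq> 0\<close> unfolding eigvecs_def by blast
qed

lemma eigvecs_similar:
  fixes M Q B :: "real^'n^'n"
  assumes Q: "invertible Q" and MQ: "M ** Q = Q ** B"
  shows "eigvecs M = (*v) Q ` eigvecs B"
proof (rule subset_antisym)
  obtain P where PQ: "P ** Q = mat 1" and QP: "Q ** P = mat 1"
    using Q invertible_def by blast
  have "B ** P = P ** M"
    by (metis MQ PQ QP matrix_mul_assoc matrix_mul_lid matrix_mul_rid)
  moreover have "inj ((*v) P)"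
    using QP matrix_left_invertible_injective by blast
  ultimately have "(*v) Q ` (*v) P ` eigvecs M \<subseteq> (*v) Q ` eigvecs B"
    by (intro image_mono eigvecs_intertwining_subset)
  then show "eigvecs M \<subseteq> (*v) Q ` eigvecs B"
    by (simp add: image_comp o_def matrix_vector_mul_assoc QP)
  show "(*v) Q ` eigvecs B \<subseteq> eigvecs M"
    using MQ PQ matrix_left_invertible_injective eigvecs_intertwining_subset by blast
qed

lemma eigvecs_subset_quadratic:
  fixes A :: "real^'n^'n"
  shows "eigvecs A \<subseteq> eigvecs (a *\<^sub>R mat 1 + b *\<^sub>R A + c *\<^sub>R (A ** A))"
proof
  fix v assume "v \<in> eigvecs A"
  then obtain l where v: "v \<noteq> 0" "A *v v = l *\<^sub>R v"
    unfolding eigvecs_def by blast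
  have "(a *\<^sub>R mat 1 + b *\<^sub>R A + c *\<^sub>R (A ** A)) *v v = (a + b * l + c * l * l) *\<^sub>R v"
    by (simp add: matrix_vector_mult_add_rdistrib v(2) matrix_vector_mult_scaleR algebra_simps
        flip: scaleR_matrix_vector_assoc matrix_vector_mul_assoc)
  then show "v \<in> eigvecs (a *\<^sub>R mat 1 + b *\<^sub>R A + c *\<^sub>R (A ** A))"
    using v(1) unfolding eigvecs_def by blast
qed

lemma matrix_inv_eq:
  fixes A B :: "'a::field^'n^'n"
  assumes "A ** B = mat 1"
  shows "matrix_inv A = B"
  unfolding matrix_inv_def
proof (rule some_equality)
  show "A ** B = mat 1 \<and> B ** A = mat 1"
    using assms matrix_left_right_inverse by blast
  fix B' assume "A ** B' = mat 1 \<and> B' ** A = mat 1"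
  then show "B' = B"
    by (metis assms matrix_mul_assoc matrix_mul_lid matrix_mul_rid)
qed

lemma invertible_matrix_inv:
  fixes A :: "'a::field^'n^'n"
  assumes "invertible A"
  shows "A ** matrix_inv A = mat 1" "matrix_inv A ** A = mat 1"
proof -
  obtain B where "A ** B = mat 1"
    using assms invertible_right_inverse by blast
  then show "A ** matrix_inv A = mat 1" "matrix_inv A ** A = mat 1"
    by (simp_all add: matrix_inv_eq matrix_left_right_inverse)
qed

lemma int_point_matrix_vector_mult:
  fixes Q :: "real^'n^'n"
  assumes "\<forall>i j. Q $ i $ j \<in> \<int>" and "int_point x"
  shows "int_point (Q *v x)"
  using assms unfolding int_point_def matrix_vector_mult_def
  by (auto intro!: Ints_sum Ints_mult)

lemma lattice_preservingI:
  fixes Q P :: "real^'n^'n"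
  assumes "Q ** P = mat 1" "\<forall>i j. Q $ i $ j \<in> \<int>" "\<forall>i j. P $ i $ j \<in> \<int>"
  shows "lattice_preserving Q"
  using assms by (auto simp: lattice_preserving_def invertible_right_inverse matrix_inv_eq)

lemma lattice_preserving_int_point_iff:
  fixes Q :: "real^'n^'n"
  assumes "lattice_preserving Q"
  shows "int_point (Q *v x) \<longleftrightarrow> int_point x"
proof -
  have "matrix_inv Q ** Q = mat 1"
    using assms by (simp add: lattice_preserving_def invertible_matrix_inv)
  then show ?thesis
    using assms int_point_matrix_vector_mult[of Q x] int_point_matrix_vector_mult[of "matrix_inv Q" "Q *v x"]
    by (auto simp: lattice_preserving_def matrix_vector_mul_assoc)
qed

lemma cont_frac_of_matrix_similar:
  fixes M Q B A :: "real^'n^'n"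
  assumes Q: "lattice_preserving Q" and MQ: "M ** Q = Q ** B" and BA: "eigvecs B = eigvecs A"
  shows "cont_frac_of_matrix M = (*v) Q ` cont_frac_of_matrix A"
proof -
  have "invertible Q"
    using Q by (simp add: lattice_preserving_def)
  then have f: "linear ((*v) Q)" "inj ((*v) Q)"
    by (simp_all add: matrix_vector_mul_linear invertible_eq_bij bij_is_inj)
  have "eig_hyperplanes M = image ((*v) Q) ` eig_hyperplanes A"
    using eigvecs_similar[OF \<open>invertible Q\<close> MQ] BA by (simp add: eig_hyperplanes_linear_image[OF f])
  then show ?thesis
    unfolding cont_frac_of_matrix_def
    by (simp add: cont_frac_linear_image[OF f lattice_preserving_int_point_iff[OF Q]])
qed

definition B_mat :: "nat \<Rightarrow> real^3^3" where
  "B_mat t = vector [vector [2, real t + 3, 1], vector [1, real t + 3, 1],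
                     vector [1, real t + 2, 1]]"

definition Q_mat :: "nat \<Rightarrow> real^3^3" where
  "Q_mat t = vector [vector [1, real t + 2, - real t - 4], vector [0, - real t - 5, real t + 6],
                     vector [0, 1, -1]]"

lemmas mat3_simps = vec_eq_iff forall_3 sum_3 matrix_matrix_mult_def mat_def
  A_mat_def M_mat_def B_mat_def Q_mat_def

lemma B_mat_eq_quadratic_A:
  "B_mat t = 2 *\<^sub>R mat 1 + (real t + 3) *\<^sub>R A_mat t + 1 *\<^sub>R (A_mat t ** A_mat t)"
  by (simp add: mat3_simps algebra_simps)

lemma A_mat_eq_quadratic_B:
  "A_mat t = (- real t - 4) *\<^sub>R mat 1 + (real t + 6) *\<^sub>R B_mat t + (-1) *\<^sub>R (B_mat t ** B_mat t)"
  by (simp add: mat3_simps algebra_simps)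

lemma eigvecs_B_mat_eq: "eigvecs (B_mat t) = eigvecs (A_mat t)"
proof (rule subset_antisym)
  show "eigvecs (B_mat t) \<subseteq> eigvecs (A_mat t)"
    unfolding A_mat_eq_quadratic_B[of t] by (rule eigvecs_subset_quadratic)
  show "eigvecs (A_mat t) \<subseteq> eigvecs (B_mat t)"
    unfolding B_mat_eq_quadratic_A[of t] by (rule eigvecs_subset_quadratic)
qed

lemma M_mat_Q_mat: "M_mat t ** Q_mat t = Q_mat t ** B_mat t"
  by (simp add: mat3_simps algebra_simps)

lemma lattice_preserving_Q_mat: "lattice_preserving (Q_mat t)"
proof (rule lattice_preservingI)
  let ?P = "vector [vector [1, 2, real t + 8], vector [0, 1, real t + 6],
                    vector [0, 1, real t + 5]] :: real^3^3"
  show "Q_mat t ** ?P = mat 1"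
    by (simp add: mat3_simps algebra_simps)
  show "\<forall>i j. Q_mat t $ i $ j \<in> \<int>" "\<forall>i j. ?P $ i $ j \<in> \<int>"
    by (simp_all add: forall_3 Q_mat_def)
qed

theorem mainTheorem2:
  fixes t :: nat
  shows "cf_equivalent (cont_frac_of_matrix (A_mat t)) (cont_frac_of_matrix (M_mat t))"
proof -
  have "cont_frac_of_matrix (M_mat t) = (*v) (Q_mat t) ` cont_frac_of_matrix (A_mat t)"
    by (rule cont_frac_of_matrix_similar[OF lattice_preserving_Q_mat M_mat_Q_mat eigvecs_B_mat_eq])
  then show ?thesis
    unfolding cf_equivalent_def using lattice_preserving_Q_mat by blast
qed

end
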